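(* Let $J$ be a real symmetric $n\times n$ matrix with pairwise distinct eigenvalues, and consider the Euler–Arnold equations $$\dot M = [M,\Omega],\qquad M = \Omega J + J\Omega,$$ where $M\in\mathfrak{so}(n)$ and $\Omega\in\mathfrak{so}(n)$ is the unique skew-symmetric matrix with $\Omega J + J\Omega = M$. Then $M$ is an equilibrium point of this system if and only if there exists an orthonormal basis of $\mathbb{R}^n$ in which $J$ is diagonal and $\Omega$ is block-diagonal of the form $$\Omega = \operatorname{diag}\bigl(\omega_1 A_1,\ \dots,\ \omega_k A_k,\ 0,\ \dots,\ 0\bigr),$$ where, for each $i=1,\dots,k$, $A_i\in \mathfrak{so}(2m_i)\cap \mathrm{SO}(2m_i)$ for some integer $m_i>0$, and $\omega_1,\dots,\omega_k$ are pairwise distinct positive real numbers. Moreover, this form of $\Omega$ is unique up to a permutation of the blocks.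
   Context: $\mathfrak{so}(m)$ denotes the space of real skew-symmetric $m\times m$ matrices and $\mathrm{SO}(m)$ the group of real orthogonal $m\times m$ matrices of determinant $1$; $[X,Y]=XY-YX$. The linear map $\Omega\mapsto \Omega J + J\Omega$ is invertible on $\mathfrak{so}(n)$, so $\Omega$ is determined by $M$. An equilibrium point means a point $M$ with $[M,\Omega]=0$. In the block form, the trailing zero entries form a zero block (possibly empty), and $k\ge 0$. *)

theory Defs
  imports "Jordan_Normal_Form.Char_Poly"
begin

definition skew_mat :: "nat \<Rightarrow> real mat \<Rightarrow> bool" where
  "skew_mat n A \<longleftrightarrow> A \<in> carrier_mat n n \<and> transpose_mat A = - A"

definition symmetric_mat :: "nat \<Rightarrow> real mat \<Rightarrow> bool" where
  "symmetric_mat n A \<longleftrightarrow> A \<in> carrier_mat n n \<and> transpose_mat A = A"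

definition orth_mat :: "nat \<Rightarrow> real mat \<Rightarrow> bool" where
  "orth_mat n Q \<longleftrightarrow> Q \<in> carrier_mat n n \<and> transpose_mat Q * Q = 1\<^sub>m n"

definition so_SO_block :: "real mat \<Rightarrow> bool" where
  "so_SO_block A \<longleftrightarrow> (\<exists>m>0. skew_mat (2*m) A \<and> orth_mat (2*m) A \<and> det A = 1)"

text \<open>Block form: Q is an orthogonal matrix (an orthonormal basis, given by its columns)
  in which J is diagonal and Omega equals diag(w_1 A_1, ..., w_k A_k, 0, ..., 0),
  where bs = [(w_1, A_1), ..., (w_k, A_k)] and the trailing zero block has size
  n - sum of the block sizes (possibly 0).\<close>
definition block_form :: "nat \<Rightarrow> real mat \<Rightarrow> real mat \<Rightarrow> real mat \<Rightarrow> (real \<times> real mat) list \<Rightarrow> bool" where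
  "block_form n J \<Omega> Q bs \<longleftrightarrow>
     orth_mat n Q \<and>
     diagonal_mat (transpose_mat Q * J * Q) \<and>
     (\<forall>(w, A) \<in> set bs. w > 0 \<and> so_SO_block A) \<and>
     distinct (map fst bs) \<and>
     sum_list (map (\<lambda>(w, A). dim_row A) bs) \<le> n \<and>
     transpose_mat Q * \<Omega> * Q =
       diag_block_mat (map (\<lambda>(w, A). w \<cdot>\<^sub>m A) bs @
         [0\<^sub>m (n - sum_list (map (\<lambda>(w, A). dim_row A) bs))
              (n - sum_list (map (\<lambda>(w, A). dim_row A) bs))])"

end

theory Submission
  imports Defs
begin

text \<open>Since M = \<Omega>J + J\<Omega>, the commutator [M, \<Omega>] equals [J, \<Omega>^2], so M is an equilibrium
  iff \<Omega>^2 commutes with J. As J has simple spectrum, this means that \<Omega>^2 is diagonal in an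
  orthonormal eigenbasis of J, which we order by increasing eigenvalue of \<Omega>^2 (all of them are
  \<le> 0 since \<Omega> is skew). The skew matrix \<Omega> commutes with the diagonal matrix \<Omega>^2, so it is
  block diagonal along the eigenspaces of \<Omega>^2; on the eigenspace for -\<omega>^2 < 0 the block is
  \<omega>A with A skew and A^2 = -1, hence A \<in> so(2m) \<inter> SO(2m) (its determinant is positive because
  A has no real eigenvalue), and on the kernel the block vanishes. Conversely such a block form
  makes \<Omega>^2 diagonal in a basis diagonalising J. The pairs (\<omega>, block size) are unique because
  the block size for \<omega> is the multiplicity of -\<omega>^2 as a root of the characteristic polynomial
  of \<Omega>^2.\<close>

lemma index_mult_mat_sum:
  assumes "A \<in> carrier_mat n k" "B \<in> carrier_mat k m" "i < n" "j < m"
  shows "(A * B) $$ (i, j) = (\<Sum>l\<in>{0..<k}. A $$ (i, l) * B $$ (l, j))"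
  using assms by (auto simp: scalar_prod_def intro!: sum.cong)

lemma diagonal_mat_mult_left_index:
  fixes D X :: "'a::semiring_0 mat"
  assumes "diagonal_mat D" "D \<in> carrier_mat n n" "X \<in> carrier_mat n m" "i < n" "j < m"
  shows "(D * X) $$ (i, j) = D $$ (i, i) * X $$ (i, j)"
proof -
  have "(D * X) $$ (i, j) = (\<Sum>l\<in>{0..<n}. D $$ (i, l) * X $$ (l, j))"
    using index_mult_mat_sum assms by blast
  also have "\<dots> = (\<Sum>l\<in>{0..<n}. if l = i then D $$ (i, i) * X $$ (i, j) else 0)"
    using assms by (intro sum.cong) (auto simp: diagonal_mat_def)
  finally show ?thesis using assms by simp
qed

lemma diagonal_mat_mult_right_index:
  fixes D X :: "'a::semiring_0 mat"
  assumes "diagonal_mat D" "D \<in> carrier_mat m m" "X \<in> carrier_mat n m" "i < n" "j < m"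
  shows "(X * D) $$ (i, j) = X $$ (i, j) * D $$ (j, j)"
proof -
  have "(X * D) $$ (i, j) = (\<Sum>l\<in>{0..<m}. X $$ (i, l) * D $$ (l, j))"
    using index_mult_mat_sum assms by blast
  also have "\<dots> = (\<Sum>l\<in>{0..<m}. if l = j then X $$ (i, j) * D $$ (j, j) else 0)"
    using assms by (intro sum.cong) (auto simp: diagonal_mat_def)
  finally show ?thesis using assms by simp
qed

lemma diagonal_mat_commute:
  fixes D S :: "'a::comm_semiring_0 mat"
  assumes "diagonal_mat D" "diagonal_mat S" "D \<in> carrier_mat n n" "S \<in> carrier_mat n n"
  shows "D * S = S * D"
proof (rule eq_matI)
  fix i j assume "i < dim_row (S * D)" "j < dim_col (S * D)"
  hence ij: "i < n" "j < n" using assms by auto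
  show "(D * S) $$ (i, j) = (S * D) $$ (i, j)"
    using diagonal_mat_mult_left_index[OF assms(1,3,4) ij]
      diagonal_mat_mult_right_index[OF assms(1,3,4) ij] assms ij
    by (cases "i = j") (auto simp: diagonal_mat_def mult.commute)
qed (use assms in auto)

lemma commute_diagonal_mat_index_eq_0:
  fixes D X :: "'a::idom mat"
  assumes "diagonal_mat D" "D \<in> carrier_mat n n" "X \<in> carrier_mat n n" "D * X = X * D"
    and "i < n" "j < n" "D $$ (i, i) \<noteq> D $$ (j, j)"
  shows "X $$ (i, j) = 0"
proof -
  have "D $$ (i, i) * X $$ (i, j) = X $$ (i, j) * D $$ (j, j)"
    using assms diagonal_mat_mult_left_index[OF assms(1-3)] diagonal_mat_mult_right_index[OF assms(1,2,3)]
    by metis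
  hence "(D $$ (i, i) - D $$ (j, j)) * X $$ (i, j) = 0" by (simp add: algebra_simps)
  thus ?thesis using assms(7) by simp
qed

lemma skew_index:
  assumes "X \<in> carrier_mat n n" "transpose_mat X = - X" "i < n" "j < n"
  shows "X $$ (j, i) = - X $$ (i, j)"
  using assms by (metis carrier_matD index_transpose_mat(1) index_uminus_mat(1))

lemma skew_square_diagonal_index:
  fixes X :: "'a::comm_ring_1 mat"
  assumes "X \<in> carrier_mat n n" "transpose_mat X = - X" "i < n"
  shows "(X * X) $$ (i, i) = - (\<Sum>l\<in>{0..<n}. (X $$ (i, l))\<^sup>2)"
proof -
  have "(X * X) $$ (i, i) = (\<Sum>l\<in>{0..<n}. X $$ (i, l) * X $$ (l, i))"
    using index_mult_mat_sum assms by blast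
  also have "\<dots> = (\<Sum>l\<in>{0..<n}. - (X $$ (i, l))\<^sup>2)"
    using skew_index[OF assms(1,2) assms(3)] by (intro sum.cong) (auto simp: power2_eq_square)
  finally show ?thesis by (simp add: sum_negf)
qed

lemma skew_square_diagonal_index_nonpos:
  fixes X :: "'a::linordered_idom mat"
  assumes "X \<in> carrier_mat n n" "transpose_mat X = - X" "i < n"
  shows "(X * X) $$ (i, i) \<le> 0"
  unfolding skew_square_diagonal_index[OF assms] by (simp add: sum_nonneg)

lemma skew_square_diagonal_index_eq_0:
  fixes X :: "'a::linordered_idom mat"
  assumes "X \<in> carrier_mat n n" "transpose_mat X = - X" "i < n" "j < n"
    and "(X * X) $$ (i, i) = 0"
  shows "X $$ (i, j) = 0"
proof -
  have "(\<Sum>l\<in>{0..<n}. (X $$ (i, l))\<^sup>2) = 0"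
    using assms skew_square_diagonal_index[OF assms(1-3)] by simp
  thus ?thesis using assms(4) by (simp add: sum_nonneg_eq_0_iff)
qed

lemma not_eigenvalue_if_square_eq_minus_one:
  fixes A :: "real mat"
  assumes A: "A \<in> carrier_mat n n" and sq: "A * A = - 1\<^sub>m n"
  shows "\<not> eigenvalue A t"
proof
  assume "eigenvalue A t"
  then obtain v where v: "v \<in> carrier_vec n" "v \<noteq> 0\<^sub>v n" "A *\<^sub>v v = t \<cdot>\<^sub>v v"
    using A unfolding eigenvalue_def eigenvector_def by auto
  have "(t * t) \<cdot>\<^sub>v v = A *\<^sub>v (A *\<^sub>v v)"
    using v A by (simp add: mult_mat_vec smult_smult_assoc)
  also have "\<dots> = (A * A) *\<^sub>v v" using A v by simp
  also have "\<dots> = - v" using sq v by auto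
  finally have tv: "(t * t) \<cdot>\<^sub>v v = - v" .
  have "v = 0\<^sub>v n"
  proof (rule eq_vecI)
    fix i assume "i < dim_vec (0\<^sub>v n)"
    hence i: "i < n" by simp
    have "(t * t) * v $ i = - v $ i" using arg_cong[OF tv, of "\<lambda>x. x $ i"] i v by simp
    hence "(t * t + 1) * v $ i = 0" by (simp add: algebra_simps)
    moreover have "t * t + 1 \<noteq> 0" by (smt (verit) zero_le_square)
    ultimately show "v $ i = 0\<^sub>v n $ i" using i by simp
  qed (use v in simp)
  thus False using v by simp
qed

text \<open>The characteristic polynomial is monic, so if it had a negative value at 0 it would have
  a positive real root.\<close>
lemma det_uminus_pos_if_no_eigenvalue:
  fixes A :: "real mat"
  assumes A: "A \<in> carrier_mat n n" and no_eig: "\<And>t. \<not> eigenvalue A t"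
  shows "det (- A) > 0"
proof (rule ccontr)
  let ?p = "char_poly A"
  assume "\<not> det (- A) > 0"
  moreover have "poly ?p 0 = det (- A)"
  proof -
    have "char_matrix A 0 = A" unfolding char_matrix_def using A by (intro eq_matI) auto
    thus ?thesis using char_poly_matrix[OF A, of 0] by simp
  qed
  moreover have "det (- A) \<noteq> 0"
    using no_eig[of 0] eigenvalue_root_char_poly[OF A, of 0] calculation(2) by simp
  ultimately have p0: "poly ?p 0 < 0" by simp
  have lc: "lead_coeff ?p = 1" using degree_monic_char_poly[OF A] by simp
  obtain N where N: "\<forall>x\<ge>N. poly ?p x \<ge> lead_coeff ?p"
    using poly_pinfty_gt_lc[of ?p] lc by auto
  have "poly ?p (max N 1) \<ge> 1" using N lc by simp
  then obtain x where "poly ?p x = 0"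
    using poly_IVT_pos[OF _ p0, of "max N 1"] by force
  thus False using no_eig[of x] eigenvalue_root_char_poly[OF A] by simp
qed

lemma so_SO_block_if_skew_square_eq_minus_one:
  fixes A :: "real mat"
  assumes A: "A \<in> carrier_mat s s" and "s > 0" and skew: "transpose_mat A = - A"
    and sq: "A * A = - 1\<^sub>m s"
  shows "so_SO_block A"
proof -
  have mA: "- A = (-1) \<cdot>\<^sub>m A" by (rule eq_matI) auto
  have m1: "- 1\<^sub>m s = (-1) \<cdot>\<^sub>m (1\<^sub>m s :: real mat)" by (rule eq_matI) auto
  have sq_det: "det A * det A = (-1) ^ s"
    using det_mult[OF A A] unfolding sq m1 by simp
  have "det A = (-1) ^ s * det A"
    using det_transpose[OF A] A by (simp add: skew mA)
  hence "even s" using sq_det by (cases "even s") auto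
  then obtain m where m: "s = 2 * m" by blast
  have "det A > 0"
    using det_uminus_pos_if_no_eigenvalue[OF A not_eigenvalue_if_square_eq_minus_one[OF A sq]]
      A \<open>even s\<close> by (simp add: mA)
  moreover have "(det A - 1) * (det A + 1) = 0"
    using sq_det \<open>even s\<close> by (simp add: algebra_simps)
  ultimately have "det A = 1" by auto
  moreover have "transpose_mat A * A = 1\<^sub>m s"
    using A sq by (simp add: skew)
  ultimately show ?thesis
    unfolding so_SO_block_def skew_mat_def orth_mat_def using A skew m \<open>s > 0\<close> by auto
qed

lemma so_SO_blockD:
  fixes A :: "real mat"
  assumes "so_SO_block A"
  shows "A \<in> carrier_mat (dim_row A) (dim_row A)" "dim_row A > 0" "A * A = - 1\<^sub>m (dim_row A)"
proof -
  obtain m where m: "m > 0" "skew_mat (2 * m) A" "orth_mat (2 * m) A"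
    using assms unfolding so_SO_block_def by blast
  hence A: "A \<in> carrier_mat (2 * m) (2 * m)" and skew: "transpose_mat A = - A"
    and orth: "transpose_mat A * A = 1\<^sub>m (2 * m)"
    unfolding skew_mat_def orth_mat_def by auto
  thus "A \<in> carrier_mat (dim_row A) (dim_row A)" "dim_row A > 0" using m by auto
  have "- (A * A) = 1\<^sub>m (2 * m)" using orth A by (simp add: skew)
  thus "A * A = - 1\<^sub>m (dim_row A)" using A by (metis carrier_matD(1) uminus_uminus_mat)
qed

definition block_size :: "(real \<times> real mat) list \<Rightarrow> nat" where
  "block_size bs = sum_list (map (\<lambda>(w, A). dim_row A) bs)"

definition block_diag :: "nat \<Rightarrow> (real \<times> real mat) list \<Rightarrow> real mat" where
  "block_diag n bs = diag_block_mat (map (\<lambda>(w, A). w \<cdot>\<^sub>m A) bs @ [0\<^sub>m (n - block_size bs) (n - block_size bs)])"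

definition admissible_blocks :: "(real \<times> real mat) list \<Rightarrow> bool" where
  "admissible_blocks bs \<longleftrightarrow> (\<forall>(w, A) \<in> set bs. w > 0 \<and> so_SO_block A) \<and> distinct (map fst bs)"

lemma block_form_iff:
  "block_form n J \<Omega> Q bs \<longleftrightarrow> orth_mat n Q \<and> diagonal_mat (transpose_mat Q * J * Q)
     \<and> admissible_blocks bs \<and> block_size bs \<le> n \<and> transpose_mat Q * \<Omega> * Q = block_diag n bs"
  unfolding block_form_def admissible_blocks_def block_size_def block_diag_def by auto

lemma block_diag_Nil: "block_diag n [] = 0\<^sub>m n n"
  by (simp add: block_diag_def block_size_def)

lemma block_diag_Cons:
  assumes "block_diag (n - dim_row A) bs = B"
  shows "block_diag n ((w, A) # bs) =
    four_block_mat (w \<cdot>\<^sub>m A) (0\<^sub>m (dim_row A) (dim_col B)) (0\<^sub>m (dim_row B) (dim_col A)) B"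
  using assms by (simp add: block_diag_def block_size_def Let_def diff_diff_add)

lemma block_diagonal_mat_split:
  assumes X: "X \<in> carrier_mat (s + t) (s + t)"
    and zero: "\<And>i j. i < s + t \<Longrightarrow> j < s + t \<Longrightarrow> (i < s) \<noteq> (j < s) \<Longrightarrow> X $$ (i, j) = 0"
  shows "X = four_block_mat (mat s s (\<lambda>(i, j). X $$ (i, j))) (0\<^sub>m s t) (0\<^sub>m t s)
    (mat t t (\<lambda>(i, j). X $$ (i + s, j + s)))"
  by (rule eq_matI) (use X zero in auto)

lemma four_block_diagonal_mult:
  fixes A B C D :: "'a::semiring_0 mat"
  assumes "A \<in> carrier_mat s s" "B \<in> carrier_mat t t" "C \<in> carrier_mat s s" "D \<in> carrier_mat t t"
  shows "four_block_mat A (0\<^sub>m s t) (0\<^sub>m t s) B * four_block_mat C (0\<^sub>m s t) (0\<^sub>m t s) D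
    = four_block_mat (A * C) (0\<^sub>m s t) (0\<^sub>m t s) (B * D)"
proof -
  have "four_block_mat A (0\<^sub>m s t) (0\<^sub>m t s) B * four_block_mat C (0\<^sub>m s t) (0\<^sub>m t s) D
    = four_block_mat (A * C + 0\<^sub>m s t * 0\<^sub>m t s) (A * 0\<^sub>m s t + 0\<^sub>m s t * D)
        (0\<^sub>m t s * C + B * 0\<^sub>m t s) (0\<^sub>m t s * 0\<^sub>m s t + B * D)"
    by (rule mult_four_block_mat) (use assms in auto)
  also have "\<dots> = four_block_mat (A * C) (0\<^sub>m s t) (0\<^sub>m t s) (B * D)"
    using assms by simp
  finally show ?thesis .
qed

lemma four_block_diagonal_skew:
  fixes A B :: "'a::ring mat"
  assumes A: "A \<in> carrier_mat s s" and B: "B \<in> carrier_mat t t"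
    and skew: "transpose_mat (four_block_mat A (0\<^sub>m s t) (0\<^sub>m t s) B)
      = - four_block_mat A (0\<^sub>m s t) (0\<^sub>m t s) B"
  shows "transpose_mat A = - A" "transpose_mat B = - B"
proof -
  define X where "X = four_block_mat A (0\<^sub>m s t) (0\<^sub>m t s) B"
  have X: "X \<in> carrier_mat (s + t) (s + t)" using A B by (simp add: X_def)
  note entry = skew_index[OF X skew[folded X_def]]
  show "transpose_mat A = - A"
  proof (rule eq_matI)
    fix i j assume "i < dim_row (- A)" "j < dim_col (- A)"
    hence ij: "i < s" "j < s" using A by auto
    hence "A $$ (j, i) = X $$ (j, i)" "A $$ (i, j) = X $$ (i, j)" using A B by (simp_all add: X_def)
    thus "transpose_mat A $$ (i, j) = (- A) $$ (i, j)" using entry[of i j] ij A by simp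
  qed (use A in auto)
  show "transpose_mat B = - B"
  proof (rule eq_matI)
    fix i j assume "i < dim_row (- B)" "j < dim_col (- B)"
    hence ij: "i < t" "j < t" using B by auto
    hence "B $$ (j, i) = X $$ (j + s, i + s)" "B $$ (i, j) = X $$ (i + s, j + s)"
      using A B by (simp_all add: X_def)
    thus "transpose_mat B $$ (i, j) = (- B) $$ (i, j)" using entry[of "i + s" "j + s"] ij B by simp
  qed (use B in auto)
qed

lemma sorted_initial_segment:
  fixes f :: "nat \<Rightarrow> 'a::linorder"
  assumes sorted: "\<And>i j. i \<le> j \<Longrightarrow> j < N \<Longrightarrow> f i \<le> f j" and "N > 0"
  obtains s where "0 < s" "s \<le> N" "\<And>i. i < N \<Longrightarrow> i < s \<longleftrightarrow> f i = f 0"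
proof
  define s where "s = (LEAST i. i = N \<or> f i \<noteq> f 0)"
  have s: "s = N \<or> f s \<noteq> f 0" unfolding s_def by (rule LeastI[of _ N]) simp
  have below: "f i = f 0" if "i < s" "i < N" for i
    using not_less_Least[of i "\<lambda>i. i = N \<or> f i \<noteq> f 0"] that unfolding s_def by blast
  show "s \<le> N" unfolding s_def by (rule Least_le) simp
  show "0 < s" using s \<open>N > 0\<close> by (cases "s = 0") simp_all
  fix i assume "i < N"
  show "i < s \<longleftrightarrow> f i = f 0"
  proof
    assume "f i = f 0"
    show "i < s"
    proof (rule ccontr)
      assume "\<not> i < s"
      hence "s < N" using \<open>i < N\<close> by simp
      hence "f 0 < f s" using s sorted[of 0 s] by simp
      also have "f s \<le> f i" using sorted[of s i] \<open>\<not> i < s\<close> \<open>i < N\<close> by simp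
      finally show False using \<open>f i = f 0\<close> by simp
    qed
  qed (use below \<open>i < N\<close> in blast)
qed

lemma skew_square_scalar_imp_so_SO_block:
  fixes X :: "real mat"
  assumes X: "X \<in> carrier_mat s s" and "s > 0" and skew: "transpose_mat X = - X"
    and sq: "X * X = c \<cdot>\<^sub>m 1\<^sub>m s" and "c < 0"
  obtains w A where "w > 0" "w * w = - c" "so_SO_block A" "dim_row A = s" "X = w \<cdot>\<^sub>m A"
proof
  define w where "w = sqrt (- c)"
  show w: "w > 0" "w * w = - c" using \<open>c < 0\<close> unfolding w_def by auto
  define A where "A = (1 / w) \<cdot>\<^sub>m X"
  have A: "A \<in> carrier_mat s s" unfolding A_def using X by simp
  show "dim_row A = s" using A by simp
  show "X = w \<cdot>\<^sub>m A" unfolding A_def by (rule eq_matI) (use w X in auto)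
  have "transpose_mat A = - A"
  proof (rule eq_matI)
    fix i j assume "i < dim_row (- A)" "j < dim_col (- A)"
    hence "i < s" "j < s" using A by auto
    thus "transpose_mat A $$ (i, j) = (- A) $$ (i, j)"
      using skew_index[OF X skew, of i j] X unfolding A_def by simp
  qed (use A in auto)
  moreover have "A * A = - 1\<^sub>m s"
  proof -
    have "A * A = (1 / w) \<cdot>\<^sub>m ((1 / w) \<cdot>\<^sub>m (X * X))"
      unfolding A_def
      by (simp add: mult_smult_assoc_mat[OF X smult_carrier_mat[OF X]] mult_smult_distrib[OF X X])
    also have "\<dots> = - 1\<^sub>m s" unfolding sq by (rule eq_matI) (use w in \<open>auto simp: field_simps\<close>)
    finally show ?thesis .
  qed
  ultimately show "so_SO_block A"
    using so_SO_block_if_skew_square_eq_minus_one[OF A \<open>s > 0\<close>] by blast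
qed

lemma skew_sorted_square_split_first_block:
  fixes X :: "real mat"
  assumes X: "X \<in> carrier_mat N N" and skew: "transpose_mat X = - X" and diag: "diagonal_mat (X * X)"
    and sorted: "\<And>i j. i \<le> j \<Longrightarrow> j < N \<Longrightarrow> (X * X) $$ (i, i) \<le> (X * X) $$ (j, j)"
    and "N > 0" and neg: "(X * X) $$ (0, 0) < 0"
  obtains s w A X4 where "0 < s" "s \<le> N" "w > 0" "so_SO_block A" "dim_row A = s"
    "X4 \<in> carrier_mat (N - s) (N - s)" "transpose_mat X4 = - X4"
    "X = four_block_mat (w \<cdot>\<^sub>m A) (0\<^sub>m s (N - s)) (0\<^sub>m (N - s) s) X4"
    "(X * X) $$ (0, 0) = - (w * w)"
    "\<And>i j. i < N - s \<Longrightarrow> j < N - s \<Longrightarrow> (X4 * X4) $$ (i, j) = (X * X) $$ (i + s, j + s)"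
    "\<And>i. i < N - s \<Longrightarrow> (X * X) $$ (i + s, i + s) \<noteq> - (w * w)"
proof -
  define lab where "lab i = (X * X) $$ (i, i)" for i
  have XX: "X * X \<in> carrier_mat N N" using X by simp
  have XX_off: "(X * X) $$ (i, j) = 0" if "i < N" "j < N" "i \<noteq> j" for i j
    using diag that XX unfolding diagonal_mat_def by (metis carrier_matD)
  obtain s where s: "0 < s" "s \<le> N" and first: "\<And>i. i < N \<Longrightarrow> i < s \<longleftrightarrow> lab i = lab 0"
    using sorted_initial_segment[of N lab] sorted \<open>N > 0\<close> unfolding lab_def by blast
  define t where "t = N - s"
  have N: "N = s + t" using s unfolding t_def by simp
  define X1 where "X1 = mat s s (\<lambda>(i, j). X $$ (i, j))"
  define X4 where "X4 = mat t t (\<lambda>(i, j). X $$ (i + s, j + s))"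
  have X1: "X1 \<in> carrier_mat s s" and X4: "X4 \<in> carrier_mat t t"
    unfolding X1_def X4_def by auto
  \<comment> \<open>X commutes with the diagonal matrix X * X, so it cannot mix its distinct diagonal entries.\<close>
  have "X $$ (i, j) = 0" if "i < N" "j < N" "lab i \<noteq> lab j" for i j
    using commute_diagonal_mat_index_eq_0[OF diag XX X _ that[unfolded lab_def]]
      assoc_mult_mat[OF X X X] by simp
  hence X_split: "X = four_block_mat X1 (0\<^sub>m s t) (0\<^sub>m t s) X4"
    unfolding X1_def X4_def using X first N by (intro block_diagonal_mat_split) auto
  have XX_split: "X * X = four_block_mat (X1 * X1) (0\<^sub>m s t) (0\<^sub>m t s) (X4 * X4)"
    by (subst (1 2) X_split) (rule four_block_diagonal_mult[OF X1 X4 X1 X4])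
  have skew1: "transpose_mat X1 = - X1" and skew4: "transpose_mat X4 = - X4"
    using four_block_diagonal_skew[OF X1 X4] skew X_split by metis+
  have "X1 * X1 = lab 0 \<cdot>\<^sub>m 1\<^sub>m s"
  proof (rule eq_matI)
    fix i j assume "i < dim_row (lab 0 \<cdot>\<^sub>m 1\<^sub>m s)" "j < dim_col (lab 0 \<cdot>\<^sub>m 1\<^sub>m s)"
    hence ij: "i < s" "j < s" by auto
    hence "(X1 * X1) $$ (i, j) = (X * X) $$ (i, j)" unfolding XX_split using X1 X4 by simp
    also have "\<dots> = (if i = j then lab 0 else 0)"
      using XX_off first[of i] ij s unfolding lab_def by auto
    finally show "(X1 * X1) $$ (i, j) = (lab 0 \<cdot>\<^sub>m 1\<^sub>m s) $$ (i, j)" using ij by simp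
  qed (use X1 in auto)
  then obtain w A where w: "w > 0" "w * w = - lab 0" and A: "so_SO_block A" "dim_row A = s"
    and X1_eq: "X1 = w \<cdot>\<^sub>m A"
    using skew_square_scalar_imp_so_SO_block[OF X1 \<open>s > 0\<close> skew1 _ neg[folded lab_def]] by metis
  show thesis
  proof (rule that[OF s w(1) A, of X4])
    show "X4 \<in> carrier_mat (N - s) (N - s)" using X4 t_def by simp
    show "transpose_mat X4 = - X4" by (rule skew4)
    show "X = four_block_mat (w \<cdot>\<^sub>m A) (0\<^sub>m s (N - s)) (0\<^sub>m (N - s) s) X4"
      using X_split X1_eq t_def by simp
    show "(X * X) $$ (0, 0) = - (w * w)" using w(2) unfolding lab_def by simp
    show "(X4 * X4) $$ (i, j) = (X * X) $$ (i + s, j + s)" if "i < N - s" "j < N - s" for i j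
      unfolding XX_split using that X1 X4 t_def by simp
    show "(X * X) $$ (i + s, i + s) \<noteq> - (w * w)" if "i < N - s" for i
      using first[of "i + s"] that w unfolding lab_def by auto
  qed
qed

text \<open>The last conjunct, recording that each -w^2 is a diagonal entry of X * X, yields the
  distinctness of the w in the induction step.\<close>
lemma skew_sorted_square_block_diag:
  fixes X :: "real mat"
  assumes "X \<in> carrier_mat N N" "transpose_mat X = - X" "diagonal_mat (X * X)"
    and "\<And>i j. i \<le> j \<Longrightarrow> j < N \<Longrightarrow> (X * X) $$ (i, i) \<le> (X * X) $$ (j, j)"
  shows "\<exists>bs. admissible_blocks bs \<and> block_size bs \<le> N \<and> X = block_diag N bs
    \<and> (\<forall>w \<in> fst ` set bs. \<exists>i<N. (X * X) $$ (i, i) = - (w * w))"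
  using assms
proof (induction N arbitrary: X rule: less_induct)
  case (less N)
  note X = less.prems(1) and skew = less.prems(2) and diag = less.prems(3)
    and sorted = less.prems(4)
  have nonpos: "(X * X) $$ (i, i) \<le> 0" if "i < N" for i
    by (rule skew_square_diagonal_index_nonpos[OF X skew that])
  show ?case
  proof (cases "N > 0 \<and> (X * X) $$ (0, 0) < 0")
    case False
    have "(X * X) $$ (i, i) = 0" if "i < N" for i
    proof -
      have "(X * X) $$ (0, 0) = 0" using False nonpos[of 0] that by auto
      thus ?thesis using sorted[of 0 i] nonpos[of i] that by simp
    qed
    hence "X = 0\<^sub>m N N"
      by (intro eq_matI) (use X skew_square_diagonal_index_eq_0[OF X skew] in auto)
    thus ?thesis by (intro exI[of _ "[]"]) (simp add: block_diag_Nil admissible_blocks_def block_size_def)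
  next
    case True
    hence "N > 0" and neg: "(X * X) $$ (0, 0) < 0" by auto
    obtain s w A X4 where s: "0 < s" "s \<le> N" and w: "w > 0" and A: "so_SO_block A" "dim_row A = s"
      and X4: "X4 \<in> carrier_mat (N - s) (N - s)" "transpose_mat X4 = - X4"
      and X_split: "X = four_block_mat (w \<cdot>\<^sub>m A) (0\<^sub>m s (N - s)) (0\<^sub>m (N - s) s) X4"
      and w_first: "(X * X) $$ (0, 0) = - (w * w)"
      and XX4: "\<And>i j. i < N - s \<Longrightarrow> j < N - s \<Longrightarrow> (X4 * X4) $$ (i, j) = (X * X) $$ (i + s, j + s)"
      and w_rest: "\<And>i. i < N - s \<Longrightarrow> (X * X) $$ (i + s, i + s) \<noteq> - (w * w)"
      using skew_sorted_square_split_first_block[OF X skew diag sorted \<open>N > 0\<close> neg] by blast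
    have "diagonal_mat (X4 * X4)"
      using diag X4 XX4 X unfolding diagonal_mat_def by auto
    moreover have "(X4 * X4) $$ (i, i) \<le> (X4 * X4) $$ (j, j)" if "i \<le> j" "j < N - s" for i j
      using XX4 sorted[of "i + s" "j + s"] that by simp
    ultimately obtain bs where bs: "admissible_blocks bs" "block_size bs \<le> N - s"
      "X4 = block_diag (N - s) bs"
      and bs_w: "\<forall>w \<in> fst ` set bs. \<exists>i<N - s. (X4 * X4) $$ (i, i) = - (w * w)"
      using less.IH[of "N - s" X4] X4 s by auto
    have bs_w': "\<exists>i<N - s. (X * X) $$ (i + s, i + s) = - (w' * w')" if "w' \<in> fst ` set bs" for w'
      using bs_w that XX4 by force
    hence "w \<notin> fst ` set bs" using w_rest by blast
    hence "admissible_blocks ((w, A) # bs)" using bs(1) w A by (simp add: admissible_blocks_def)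
    moreover have "block_size ((w, A) # bs) \<le> N" using bs(2) A s by (simp add: block_size_def)
    moreover have "X = block_diag N ((w, A) # bs)"
      using block_diag_Cons[of N A bs X4 w] so_SO_blockD(1)[OF A(1)] bs(3) X_split X4 A by simp
    moreover have "\<exists>i<N. (X * X) $$ (i, i) = - (w' * w')" if "w' \<in> fst ` set ((w, A) # bs)" for w'
    proof (cases "w' = w")
      case True
      thus ?thesis using w_first \<open>N > 0\<close> by blast
    next
      case False
      hence "w' \<in> fst ` set bs" using that by simp
      then obtain i where "i < N - s" "(X * X) $$ (i + s, i + s) = - (w' * w')" using bs_w' by blast
      thus ?thesis by (intro exI[of _ "i + s"]) simp
    qed
    ultimately show ?thesis by blast
  qed
qed

lemma orth_mat_right_inverse:
  assumes "orth_mat n Q"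
  shows "Q * transpose_mat Q = 1\<^sub>m n"
  using assms mat_mult_left_right_inverse[of "transpose_mat Q" n Q] unfolding orth_mat_def by simp

lemma orth_conj_carrier:
  assumes "orth_mat n Q" "X \<in> carrier_mat n n"
  shows "transpose_mat Q * X * Q \<in> carrier_mat n n"
  using assms unfolding orth_mat_def by auto

lemma orth_conj_mult:
  assumes Q: "orth_mat n Q" and X: "X \<in> carrier_mat n n" and Y: "Y \<in> carrier_mat n n"
  shows "(transpose_mat Q * X * Q) * (transpose_mat Q * Y * Q) = transpose_mat Q * (X * Y) * Q"
proof -
  let ?T = "transpose_mat Q"
  have Qc: "Q \<in> carrier_mat n n" and T: "?T \<in> carrier_mat n n" using Q unfolding orth_mat_def by auto
  have "(?T * X * Q) * (?T * Y * Q) = ?T * X * (Q * ?T) * Y * Q"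
    using Qc T X Y by (simp add: assoc_mult_mat[of _ n n _ n _ n])
  also have "\<dots> = ?T * (X * Y) * Q"
    using Qc T X Y by (simp add: orth_mat_right_inverse[OF Q] assoc_mult_mat[of _ n n _ n _ n])
  finally show ?thesis .
qed

lemma orth_conj_inj:
  assumes Q: "orth_mat n Q" and Z: "Z \<in> carrier_mat n n" and Z': "Z' \<in> carrier_mat n n"
    and eq: "transpose_mat Q * Z * Q = transpose_mat Q * Z' * Q"
  shows "Z = Z'"
proof -
  let ?T = "transpose_mat Q"
  have Qc: "Q \<in> carrier_mat n n" and T: "?T \<in> carrier_mat n n" using Q unfolding orth_mat_def by auto
  have undo: "Q * (?T * W * Q) * ?T = W" if W: "W \<in> carrier_mat n n" for W
  proof -
    have "Q * (?T * W * Q) * ?T = (Q * ?T) * W * (Q * ?T)"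
      using Qc T W by (simp add: assoc_mult_mat[of _ n n _ n _ n])
    thus ?thesis using W by (simp add: orth_mat_right_inverse[OF Q])
  qed
  show ?thesis using undo[OF Z] undo[OF Z'] eq by metis
qed

lemma orth_conj_commute_iff:
  assumes Q: "orth_mat n Q" and X: "X \<in> carrier_mat n n" and Y: "Y \<in> carrier_mat n n"
  shows "X * Y = Y * X \<longleftrightarrow>
    (transpose_mat Q * X * Q) * (transpose_mat Q * Y * Q) = (transpose_mat Q * Y * Q) * (transpose_mat Q * X * Q)"
  unfolding orth_conj_mult[OF Q X Y] orth_conj_mult[OF Q Y X]
  using orth_conj_inj[OF Q, of "X * Y" "Y * X"] X Y by auto

lemma orth_conj_skew:
  assumes Q: "orth_mat n Q" and X: "X \<in> carrier_mat n n" and skew: "transpose_mat X = - X"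
  shows "transpose_mat (transpose_mat Q * X * Q) = - (transpose_mat Q * X * Q)"
proof -
  have Qc: "Q \<in> carrier_mat n n" using Q unfolding orth_mat_def by auto
  have "transpose_mat (transpose_mat Q * X * Q) = transpose_mat Q * transpose_mat X * Q"
    using Qc X by (simp add: transpose_mult[of _ n n _ n] assoc_mult_mat[of _ n n _ n _ n])
  also have "\<dots> = - (transpose_mat Q * X * Q)"
    using Qc X by (simp add: skew)
  finally show ?thesis .
qed

lemma finite_eigenvalues:
  fixes J :: "'a::field mat"
  assumes "J \<in> carrier_mat n n"
  shows "finite {e. eigenvalue J e}"
proof -
  have "char_poly J \<noteq> 0" using degree_monic_char_poly[OF assms] by auto
  hence "finite {e. poly (char_poly J) e = 0}" by (rule poly_roots_finite)
  thus ?thesis using eigenvalue_root_char_poly[OF assms] by simp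
qed

lemma scalar_prod_self_pos:
  fixes v :: "real vec"
  assumes "v \<in> carrier_vec n" "v \<noteq> 0\<^sub>v n"
  shows "v \<bullet> v > 0"
proof -
  obtain i where i: "i < n" "v $ i \<noteq> 0"
    using assms by (metis carrier_vecD eq_vecI index_zero_vec)
  have "v \<bullet> v = (\<Sum>l\<in>{0..<n}. v $ l * v $ l)" using assms by (simp add: scalar_prod_def)
  also have "\<dots> > 0"
    by (rule sum_pos2[of _ i]) (use i in \<open>auto simp: zero_less_mult_iff linorder_neq_iff\<close>)
  finally show ?thesis .
qed

lemma unit_eigenvector:
  fixes J :: "real mat"
  assumes J: "J \<in> carrier_mat n n" and "eigenvalue J e"
  obtains u where "u \<in> carrier_vec n" "u \<bullet> u = 1" "J *\<^sub>v u = e \<cdot>\<^sub>v u"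
proof -
  obtain v where v: "v \<in> carrier_vec n" "v \<noteq> 0\<^sub>v n" "J *\<^sub>v v = e \<cdot>\<^sub>v v"
    using assms unfolding eigenvalue_def eigenvector_def by auto
  define p where "p = v \<bullet> v"
  have p: "p > 0" unfolding p_def using scalar_prod_self_pos[OF v(1,2)] .
  define u where "u = (1 / sqrt p) \<cdot>\<^sub>v v"
  have "u \<bullet> u = (1 / sqrt p) * ((1 / sqrt p) * p)"
    unfolding u_def p_def using v(1) by simp
  also have "\<dots> = 1" using p by (simp add: field_simps)
  finally have "u \<bullet> u = 1" .
  moreover have "u \<in> carrier_vec n" unfolding u_def using v by simp
  moreover have "J *\<^sub>v u = e \<cdot>\<^sub>v u"
    unfolding u_def using J v by (simp add: mult_mat_vec smult_smult_assoc mult.commute)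
  ultimately show ?thesis using that by blast
qed

lemma symmetric_eigenvectors_orthogonal:
  fixes J :: "real mat"
  assumes J: "J \<in> carrier_mat n n" "transpose_mat J = J"
    and u: "u \<in> carrier_vec n" "J *\<^sub>v u = e \<cdot>\<^sub>v u"
    and v: "v \<in> carrier_vec n" "J *\<^sub>v v = f \<cdot>\<^sub>v v" and "e \<noteq> f"
  shows "u \<bullet> v = 0"
proof -
  have "e * (u \<bullet> v) = (transpose_mat J *\<^sub>v u) \<bullet> v" using u v J by simp
  also have "\<dots> = u \<bullet> (J *\<^sub>v v)" by (rule transpose_vec_mult_scalar[OF J(1) v(1) u(1)])
  also have "\<dots> = f * (u \<bullet> v)" using u v by simp
  finally have "(e - f) * (u \<bullet> v) = 0" by (simp add: algebra_simps)
  thus ?thesis using \<open>e \<noteq> f\<close> by simp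
qed

lemma mat_of_cols_conj_index:
  assumes "set vs \<subseteq> carrier_vec n" "length vs = n" "X \<in> carrier_mat n n" "a < n" "b < n"
  shows "(transpose_mat (mat_of_cols n vs) * X * mat_of_cols n vs) $$ (a, b) = vs ! a \<bullet> (X *\<^sub>v vs ! b)"
proof -
  let ?Q = "mat_of_cols n vs"
  have "transpose_mat ?Q * X * ?Q = transpose_mat ?Q * (X * ?Q)"
    using assms by (intro assoc_mult_mat) auto
  moreover have "col ?Q a = vs ! a" "col ?Q b = vs ! b"
    using assms by (auto intro!: col_mat_of_cols)
  moreover have "col (X * ?Q) b = X *\<^sub>v col ?Q b"
    using assms by (intro col_mult2) auto
  ultimately show ?thesis using assms by simp
qed

lemma eigenvector_cols_orth_diagonal:
  fixes J :: "real mat"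
  assumes J: "J \<in> carrier_mat n n" "transpose_mat J = J" and L: "distinct L" "length L = n"
    and u: "\<And>e. e \<in> set L \<Longrightarrow> u e \<in> carrier_vec n" "\<And>e. e \<in> set L \<Longrightarrow> u e \<bullet> u e = 1"
      "\<And>e. e \<in> set L \<Longrightarrow> J *\<^sub>v u e = e \<cdot>\<^sub>v u e"
  defines "Q \<equiv> mat_of_cols n (map u L)"
  shows "orth_mat n Q"
    and "\<And>a b. a < n \<Longrightarrow> b < n \<Longrightarrow> (transpose_mat Q * J * Q) $$ (a, b) = (if a = b then L ! a else 0)"
proof -
  have vs: "set (map u L) \<subseteq> carrier_vec n" "length (map u L) = n" using u(1) L by auto
  have Lu: "L ! a \<in> set L" "u (L ! a) \<in> carrier_vec n" if "a < n" for a
    using L that u(1) by auto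
  have conj: "(transpose_mat Q * X * Q) $$ (a, b) = u (L ! a) \<bullet> (X *\<^sub>v u (L ! b))"
    if "X \<in> carrier_mat n n" "a < n" "b < n" for X a b
    unfolding Q_def using mat_of_cols_conj_index[OF vs that] that L by simp
  have orthonormal: "u (L ! a) \<bullet> u (L ! b) = (if a = b then 1 else 0)" if "a < n" "b < n" for a b
    using u Lu[OF that(1)] Lu[OF that(2)] symmetric_eigenvectors_orthogonal[OF J] that L
    by (auto simp: nth_eq_iff_index_eq)
  have Q: "Q \<in> carrier_mat n n" unfolding Q_def using L by auto
  moreover have "transpose_mat Q * Q = 1\<^sub>m n"
  proof (rule eq_matI)
    fix a b assume "a < dim_row (1\<^sub>m n :: real mat)" "b < dim_col (1\<^sub>m n :: real mat)"
    hence ab: "a < n" "b < n" by auto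
    have "transpose_mat Q * Q = transpose_mat Q * 1\<^sub>m n * Q" using Q by simp
    thus "(transpose_mat Q * Q) $$ (a, b) = 1\<^sub>m n $$ (a, b)"
      using conj[OF one_carrier_mat ab] orthonormal[OF ab] Lu ab by simp
  qed (use Q in auto)
  ultimately show "orth_mat n Q" unfolding orth_mat_def by simp
  fix a b assume ab: "a < n" "b < n"
  have "(transpose_mat Q * J * Q) $$ (a, b) = L ! b * (u (L ! a) \<bullet> u (L ! b))"
    using conj[OF J(1) ab] u(3)[OF Lu(1)[OF ab(2)]] scalar_prod_smult_distrib[OF Lu(2)[OF ab(1)] Lu(2)[OF ab(2)]]
    by simp
  thus "(transpose_mat Q * J * Q) $$ (a, b) = (if a = b then L ! a else 0)"
    using orthonormal[OF ab] by simp
qed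

lemma sorted_orthonormal_eigenbasis:
  fixes J W :: "real mat"
  assumes sym: "symmetric_mat n J" and card: "card {e. eigenvalue J e} = n"
    and W: "W \<in> carrier_mat n n"
  obtains Q where "orth_mat n Q" "diagonal_mat (transpose_mat Q * J * Q)"
    "\<And>a b. a < n \<Longrightarrow> b < n \<Longrightarrow> a \<noteq> b \<Longrightarrow>
      (transpose_mat Q * J * Q) $$ (a, a) \<noteq> (transpose_mat Q * J * Q) $$ (b, b)"
    "\<And>a b. a \<le> b \<Longrightarrow> b < n \<Longrightarrow>
      (transpose_mat Q * W * Q) $$ (a, a) \<le> (transpose_mat Q * W * Q) $$ (b, b)"
proof -
  have J: "J \<in> carrier_mat n n" and Jt: "transpose_mat J = J"
    using sym unfolding symmetric_mat_def by auto
  define E where "E = {e. eigenvalue J e}"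
  have "\<forall>e\<in>E. \<exists>u. u \<in> carrier_vec n \<and> u \<bullet> u = 1 \<and> J *\<^sub>v u = e \<cdot>\<^sub>v u"
    using unit_eigenvector[OF J] unfolding E_def by blast
  then obtain u where u: "\<And>e. e \<in> E \<Longrightarrow> u e \<in> carrier_vec n"
    "\<And>e. e \<in> E \<Longrightarrow> u e \<bullet> u e = 1" "\<And>e. e \<in> E \<Longrightarrow> J *\<^sub>v u e = e \<cdot>\<^sub>v u e"
    by metis
  \<comment> \<open>Listing the eigenvalues by increasing diagonal entry of W in the eigenbasis sorts those entries.\<close>
  define c where "c e = u e \<bullet> (W *\<^sub>v u e)" for e
  define L where "L = sort_key c (sorted_list_of_set E)"
  have "finite E" unfolding E_def by (rule finite_eigenvalues[OF J])
  hence L: "set L = E" "length L = n" "distinct L" "sorted (map c L)"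
    unfolding L_def using card E_def by auto
  define Q where "Q = mat_of_cols n (map u L)"
  have Q: "orth_mat n Q"
    and D: "\<And>a b. a < n \<Longrightarrow> b < n \<Longrightarrow> (transpose_mat Q * J * Q) $$ (a, b) = (if a = b then L ! a else 0)"
    unfolding Q_def using eigenvector_cols_orth_diagonal[OF J Jt L(3,2)] u L(1) by auto
  have "diagonal_mat (transpose_mat Q * J * Q)"
    unfolding diagonal_mat_def using D orth_conj_carrier[OF Q J] by auto
  moreover have "(transpose_mat Q * W * Q) $$ (a, a) \<le> (transpose_mat Q * W * Q) $$ (b, b)"
    if "a \<le> b" "b < n" for a b
  proof -
    have vs: "set (map u L) \<subseteq> carrier_vec n" "length (map u L) = n" using u(1) L by auto
    have W_diag: "(transpose_mat Q * W * Q) $$ (a, a) = c (L ! a)" if "a < n" for a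
    proof -
      have "(transpose_mat Q * W * Q) $$ (a, a) = map u L ! a \<bullet> (W *\<^sub>v map u L ! a)"
        unfolding Q_def by (rule mat_of_cols_conj_index[OF vs W that that])
      also have "\<dots> = c (L ! a)" unfolding c_def using that L(2) by simp
      finally show ?thesis .
    qed
    show ?thesis
      unfolding W_diag[OF le_less_trans[OF that]] W_diag[OF that(2)]
      using sorted_nth_mono[OF L(4) that(1)] that L(2) by simp
  qed
  ultimately show ?thesis using that Q D L(2,3) by (simp add: nth_eq_iff_index_eq)
qed

lemma diagonal_mat_diag_block_mat:
  assumes "\<And>A. A \<in> set As \<Longrightarrow> diagonal_mat A \<and> square_mat A"
  shows "diagonal_mat (diag_block_mat As)"
  using assms
proof (induction As)
  case (Cons A As)
  hence "diagonal_mat A" "dim_col A = dim_row A" "diagonal_mat (diag_block_mat As)" by auto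
  moreover have "dim_col (diag_block_mat As) = dim_row (diag_block_mat As)"
    using Cons.prems diag_block_mat_square[of As] by auto
  ultimately show ?case unfolding diagonal_mat_def by (auto simp: Let_def)
qed (simp add: diagonal_mat_def)

lemma diag_mat_diag_block_mat:
  assumes "\<And>A. A \<in> set As \<Longrightarrow> square_mat A"
  shows "diag_mat (diag_block_mat As) = concat (map diag_mat As)"
  using assms
proof (induction As)
  case (Cons A As)
  have "dim_col (diag_block_mat As) = dim_row (diag_block_mat As)"
    using Cons.prems diag_block_mat_square[of As] by auto
  hence B: "diag_block_mat As \<in> carrier_mat (dim_row (diag_block_mat As)) (dim_row (diag_block_mat As))"
    by auto
  have A: "A \<in> carrier_mat (dim_row A) (dim_row A)" using Cons.prems by auto
  have "diag_mat (diag_block_mat As) = concat (map diag_mat As)" using Cons by simp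
  thus ?case unfolding diag_block_mat.simps Let_def using diag_four_block_mat[OF A B] by simp
qed (simp add: diag_mat_def)

lemma square_mat_pow_two: "B \<in> carrier_mat n n \<Longrightarrow> B ^\<^sub>m 2 = B * (B :: 'a::semiring_1 mat)"
  by (simp add: numeral_2_eq_2)

lemma block_diag_square:
  assumes "admissible_blocks bs"
  shows "block_diag n bs * block_diag n bs = diag_block_mat
    (map (\<lambda>(w, A). (- (w * w)) \<cdot>\<^sub>m 1\<^sub>m (dim_row A)) bs @ [0\<^sub>m (n - block_size bs) (n - block_size bs)])"
proof -
  define r where "r = n - block_size bs"
  let ?Bs = "map (\<lambda>(w, A). w \<cdot>\<^sub>m A) bs @ [0\<^sub>m r r]"
  have A: "A \<in> carrier_mat (dim_row A) (dim_row A)" "A * A = - 1\<^sub>m (dim_row A)"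
    if "(w, A) \<in> set bs" for w A
  proof -
    have "so_SO_block A" using assms that unfolding admissible_blocks_def by auto
    thus "A \<in> carrier_mat (dim_row A) (dim_row A)" "A * A = - 1\<^sub>m (dim_row A)"
      by (rule so_SO_blockD)+
  qed
  have sq: "Ball (set ?Bs) square_mat"
  proof
    fix B assume "B \<in> set ?Bs"
    then consider "B = 0\<^sub>m r r" | w A where "(w, A) \<in> set bs" "B = w \<cdot>\<^sub>m A" by auto
    thus "square_mat B"
    proof cases
      case (2 w A)
      have "dim_col A = dim_row A" using A(1)[OF 2(1)] by blast
      thus ?thesis using 2(2) by simp
    qed simp
  qed
  have square: "B ^\<^sub>m 2 = B * B" if "square_mat B" for B :: "real mat"
    by (rule square_mat_pow_two, rule carrier_matI[of B "dim_row B" "dim_row B"]) (use that in auto)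
  have "block_diag n bs * block_diag n bs = diag_block_mat ?Bs ^\<^sub>m 2"
    using square[OF diag_block_mat_square[OF sq]] unfolding block_diag_def r_def by simp
  also have "\<dots> = diag_block_mat (map (\<lambda>B. B ^\<^sub>m 2) ?Bs)" by (rule diag_block_pow_mat[OF sq])
  also have "map (\<lambda>B. B ^\<^sub>m 2) ?Bs
    = map (\<lambda>(w, A). (- (w * w)) \<cdot>\<^sub>m 1\<^sub>m (dim_row A)) bs @ [0\<^sub>m r r]"
  proof -
    have "(w \<cdot>\<^sub>m A) ^\<^sub>m 2 = (- (w * w)) \<cdot>\<^sub>m 1\<^sub>m (dim_row A)" if "(w, A) \<in> set bs" for w A
    proof -
      have "dim_col A = dim_row A" using A(1)[OF that] by blast
      hence "(w \<cdot>\<^sub>m A) ^\<^sub>m 2 = (w \<cdot>\<^sub>m A) * (w \<cdot>\<^sub>m A)" by (intro square) simp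
      also have "\<dots> = w \<cdot>\<^sub>m (w \<cdot>\<^sub>m (A * A))"
        unfolding mult_smult_assoc_mat[OF A(1)[OF that] smult_carrier_mat[OF A(1)[OF that]]]
          mult_smult_distrib[OF A(1)[OF that] A(1)[OF that]] ..
      also have "\<dots> = (- (w * w)) \<cdot>\<^sub>m 1\<^sub>m (dim_row A)"
        unfolding A(2)[OF that] by (rule eq_matI) auto
      finally show ?thesis .
    qed
    moreover have "(0\<^sub>m r r :: real mat) ^\<^sub>m 2 = 0\<^sub>m r r" by (subst square) simp_all
    ultimately show ?thesis by auto
  qed
  finally show ?thesis unfolding r_def .
qed

lemma block_diag_square_diagonal:
  assumes "admissible_blocks bs"
  shows "diagonal_mat (block_diag n bs * block_diag n bs)"
proof -
  define r where "r = n - block_size bs"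
  show ?thesis
    unfolding block_diag_square[OF assms] r_def[symmetric]
    by (rule diagonal_mat_diag_block_mat) (auto simp: diagonal_mat_def)
qed

lemma block_diag_square_diag_mat:
  assumes "admissible_blocks bs"
  shows "diag_mat (block_diag n bs * block_diag n bs)
    = concat (map (\<lambda>(w, A). replicate (dim_row A) (- (w * w))) bs) @ replicate (n - block_size bs) 0"
proof -
  define r where "r = n - block_size bs"
  have scalar: "diag_mat (c \<cdot>\<^sub>m 1\<^sub>m d) = replicate d c" for c :: real and d
    by (rule nth_equalityI) (auto simp: diag_mat_def)
  have zero: "diag_mat (0\<^sub>m d d :: real mat) = replicate d 0" for d
    by (rule nth_equalityI) (auto simp: diag_mat_def)
  have "diag_mat (block_diag n bs * block_diag n bs) = concat (map diag_mat
    (map (\<lambda>(w, A). (- (w * w)) \<cdot>\<^sub>m 1\<^sub>m (dim_row A)) bs @ [0\<^sub>m r r]))"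
    unfolding block_diag_square[OF assms] r_def[symmetric] by (rule diag_mat_diag_block_mat) auto
  also have "\<dots> = concat (map (\<lambda>(w, A). replicate (dim_row A) (- (w * w))) bs) @ replicate r 0"
    by (simp add: scalar zero split_def comp_def)
  finally show ?thesis unfolding r_def .
qed

lemma order_prod_list_linear:
  "order x (\<Prod>a\<leftarrow>xs. [:- a, 1:]) = count_list xs (x :: 'a::idom)"
proof (induction xs)
  case (Cons a xs)
  let ?P = "\<Prod>a\<leftarrow>xs. [:- a, 1:]"
  have P: "?P \<noteq> 0" unfolding prod_list_zero_iff by auto
  have lin: "[:- a, 1:] \<noteq> 0" by simp
  have "order x ([:- a, 1:] * ?P) = order x [:- a, 1:] + order x ?P"
    by (rule order_mult[OF no_zero_divisors[OF lin P]])
  moreover have "order x [:- a, 1:] = (if a = x then 1 else 0)"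
    using order_power_n_n[of x 1] by (auto intro: order_0I)
  ultimately show ?case using Cons.IH by (simp only: list.map prod_list.Cons) simp
qed (simp add: order_0I)

lemma count_list_replicate: "count_list (replicate k a) x = (if a = x then k else 0)"
  by (induction k) auto

lemma count_list_concat: "count_list (concat xss) x = (\<Sum>xs\<leftarrow>xss. count_list xs x)"
  by (induction xss) auto

lemma admissible_blocks_pos:
  assumes "admissible_blocks bs" "(w, A) \<in> set bs"
  shows "w > 0" "dim_row A > 0"
  using assms so_SO_blockD(2) unfolding admissible_blocks_def by auto

lemma admissible_blocks_sum_dim:
  assumes "admissible_blocks bs" "(w, A) \<in> set bs"
  shows "(\<Sum>(w', A')\<leftarrow>bs. if w' = w then dim_row A' else 0) = dim_row A"
  using assms
proof (induction bs)
  case (Cons b bs)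
  obtain w1 A1 where b: "b = (w1, A1)" by (cases b)
  have bs: "admissible_blocks bs" and w1: "w1 \<notin> fst ` set bs"
    using Cons.prems b unfolding admissible_blocks_def by auto
  show ?case
  proof (cases "w1 = w")
    case True
    hence "(w, A) \<notin> set bs" using w1 by force
    hence "A1 = A" using Cons.prems b True by simp
    moreover have "(\<Sum>(w', A')\<leftarrow>bs. if w' = w then dim_row A' else 0) = 0"
      using w1 True by (force simp: sum_list_eq_0_iff)
    ultimately show ?thesis using b True by simp
  next
    case False
    hence "(w, A) \<in> set bs" using Cons.prems b by auto
    thus ?thesis using Cons.IH bs False b by simp
  qed
qed simp

lemma admissible_blocks_mem_iff:
  assumes "admissible_blocks bs"
  shows "(w, d) \<in> set (map (\<lambda>(w, A). (w, dim_row A)) bs) \<longleftrightarrow>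
    w > 0 \<and> d > 0 \<and> d = (\<Sum>(w', A)\<leftarrow>bs. if w' = w then dim_row A else 0)"
proof
  assume "(w, d) \<in> set (map (\<lambda>(w, A). (w, dim_row A)) bs)"
  then obtain A where "(w, A) \<in> set bs" "d = dim_row A" by auto
  thus "w > 0 \<and> d > 0 \<and> d = (\<Sum>(w', A)\<leftarrow>bs. if w' = w then dim_row A else 0)"
    using admissible_blocks_pos[OF assms] admissible_blocks_sum_dim[OF assms] by auto
next
  assume d: "w > 0 \<and> d > 0 \<and> d = (\<Sum>(w', A)\<leftarrow>bs. if w' = w then dim_row A else 0)"
  have "\<exists>A. (w, A) \<in> set bs"
  proof (rule ccontr)
    assume "\<nexists>A. (w, A) \<in> set bs"
    hence "(\<Sum>(w', A)\<leftarrow>bs. if w' = w then dim_row A else 0) = 0"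
      by (force simp: sum_list_eq_0_iff)
    thus False using d by linarith
  qed
  then obtain A where A: "(w, A) \<in> set bs" ..
  thus "(w, d) \<in> set (map (\<lambda>(w, A). (w, dim_row A)) bs)"
    using d admissible_blocks_sum_dim[OF assms A] by force
qed

lemma diagonal_mat_upper_triangular:
  assumes "diagonal_mat A" "A \<in> carrier_mat n n"
  shows "upper_triangular A"
  using assms unfolding diagonal_mat_def upper_triangular_def by auto

lemma block_form_square_order:
  assumes bf: "block_form n J \<Omega> Q bs" and \<Omega>: "\<Omega> \<in> carrier_mat n n" and "w0 > 0"
  shows "order (- (w0 * w0)) (char_poly (\<Omega> * \<Omega>)) = (\<Sum>(w, A)\<leftarrow>bs. if w = w0 then dim_row A else 0)"
proof -
  have Q: "orth_mat n Q" and adm: "admissible_blocks bs"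
    and conj: "transpose_mat Q * \<Omega> * Q = block_diag n bs"
    using bf unfolding block_form_iff by auto
  let ?S = "block_diag n bs * block_diag n bs"
  have S: "?S = transpose_mat Q * (\<Omega> * \<Omega>) * Q"
    using orth_conj_mult[OF Q \<Omega> \<Omega>] conj by simp
  have Sc: "?S \<in> carrier_mat n n" unfolding S using orth_conj_carrier[OF Q] \<Omega> by simp
  have "similar_mat ?S (\<Omega> * \<Omega>)"
    by (rule similar_matI[where P = "transpose_mat Q" and Q = Q])
      (use Q Sc \<Omega> S orth_mat_right_inverse[OF Q] in \<open>auto simp: orth_mat_def\<close>)
  hence "char_poly (\<Omega> * \<Omega>) = char_poly ?S" by (simp add: char_poly_similar)
  also have "\<dots> = (\<Prod>a\<leftarrow>diag_mat ?S. [:- a, 1:])"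
    by (intro char_poly_upper_triangular[OF Sc] diagonal_mat_upper_triangular[OF _ Sc]
      block_diag_square_diagonal[OF adm])
  finally have "order (- (w0 * w0)) (char_poly (\<Omega> * \<Omega>)) = count_list (diag_mat ?S) (- (w0 * w0))"
    by (simp add: order_prod_list_linear)
  also have "\<dots> = (\<Sum>(w, A)\<leftarrow>bs. count_list (replicate (dim_row A) (- (w * w))) (- (w0 * w0)))"
    unfolding block_diag_square_diag_mat[OF adm] using \<open>w0 > 0\<close>
    by (simp add: count_list_concat count_list_replicate comp_def split_def)
  also have "\<dots> = (\<Sum>(w, A)\<leftarrow>bs. if w = w0 then dim_row A else 0)"
  proof (rule arg_cong[where f = sum_list], rule map_cong[OF refl], clarify)
    fix w A assume "(w, A) \<in> set bs"
    hence "w > 0" by (rule admissible_blocks_pos[OF adm])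
    hence "- (w * w) = - (w0 * w0) \<longleftrightarrow> w = w0"
      using \<open>w0 > 0\<close> by (metis mult_less_cancel_left_pos mult_strict_right_mono neg_equal_iff_equal
        not_less_iff_gr_or_eq)
    thus "count_list (replicate (dim_row A) (- (w * w))) (- (w0 * w0)) = (if w = w0 then dim_row A else 0)"
      by (simp add: count_list_replicate)
  qed
  finally show ?thesis .
qed

lemma block_form_unique:
  assumes "block_form n J \<Omega> Q bs" "block_form n J \<Omega> Q' bs'" "\<Omega> \<in> carrier_mat n n"
  shows "mset (map (\<lambda>(w, A). (w, dim_row A)) bs) = mset (map (\<lambda>(w, A). (w, dim_row A)) bs')"
proof -
  have adm: "admissible_blocks bs" "admissible_blocks bs'"
    using assms(1,2) unfolding block_form_iff by auto
  have sets: "set (map (\<lambda>(w, A). (w, dim_row A)) bs) = set (map (\<lambda>(w, A). (w, dim_row A)) bs')"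
    using admissible_blocks_mem_iff[OF adm(1)] admissible_blocks_mem_iff[OF adm(2)]
      block_form_square_order[OF assms(1,3)] block_form_square_order[OF assms(2,3)]
    by (auto simp del: set_map)
  have dist: "distinct (map (\<lambda>(w, A). (w, dim_row A)) bs)" if "admissible_blocks bs" for bs
  proof -
    have fst: "map fst (map (\<lambda>(w, A). (w, dim_row A)) bs) = map fst bs" by (induction bs) auto
    have "distinct (map fst (map (\<lambda>(w, A). (w, dim_row A)) bs))"
      using that unfolding fst admissible_blocks_def by blast
    thus ?thesis by (simp only: distinct_map)
  qed
  show ?thesis using set_eq_iff_mset_eq_distinct[OF dist[OF adm(1)] dist[OF adm(2)]] sets by blast
qed

lemma commute_square_if_block_form:
  assumes bf: "block_form n J \<Omega> Q bs" and J: "J \<in> carrier_mat n n" and \<Omega>: "\<Omega> \<in> carrier_mat n n"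
  shows "J * (\<Omega> * \<Omega>) = (\<Omega> * \<Omega>) * J"
proof -
  have Q: "orth_mat n Q" and D: "diagonal_mat (transpose_mat Q * J * Q)" and adm: "admissible_blocks bs"
    and conj: "transpose_mat Q * \<Omega> * Q = block_diag n bs"
    using bf unfolding block_form_iff by auto
  have "transpose_mat Q * (\<Omega> * \<Omega>) * Q = block_diag n bs * block_diag n bs"
    using orth_conj_mult[OF Q \<Omega> \<Omega>] conj by simp
  hence "diagonal_mat (transpose_mat Q * (\<Omega> * \<Omega>) * Q)"
    using block_diag_square_diagonal[OF adm] by simp
  thus ?thesis
    using diagonal_mat_commute[OF D _ orth_conj_carrier[OF Q J] orth_conj_carrier[OF Q, of "\<Omega> * \<Omega>"]]
      orth_conj_commute_iff[OF Q J, of "\<Omega> * \<Omega>"] \<Omega> by simp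
qed

lemma block_form_if_commute_square:
  assumes sym: "symmetric_mat n J" and card: "card {e. eigenvalue J e} = n"
    and \<Omega>: "\<Omega> \<in> carrier_mat n n" and skew: "transpose_mat \<Omega> = - \<Omega>"
    and comm: "J * (\<Omega> * \<Omega>) = (\<Omega> * \<Omega>) * J"
  shows "\<exists>Q bs. block_form n J \<Omega> Q bs"
proof -
  have J: "J \<in> carrier_mat n n" using sym unfolding symmetric_mat_def by simp
  have \<Omega>\<Omega>: "\<Omega> * \<Omega> \<in> carrier_mat n n" using \<Omega> by simp
  obtain Q where Q: "orth_mat n Q" and D: "diagonal_mat (transpose_mat Q * J * Q)"
    and D_distinct: "\<And>a b. a < n \<Longrightarrow> b < n \<Longrightarrow> a \<noteq> b \<Longrightarrow>
      (transpose_mat Q * J * Q) $$ (a, a) \<noteq> (transpose_mat Q * J * Q) $$ (b, b)"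
    and sorted: "\<And>a b. a \<le> b \<Longrightarrow> b < n \<Longrightarrow>
      (transpose_mat Q * (\<Omega> * \<Omega>) * Q) $$ (a, a) \<le> (transpose_mat Q * (\<Omega> * \<Omega>) * Q) $$ (b, b)"
    using sorted_orthonormal_eigenbasis[OF sym card \<Omega>\<Omega>] by blast
  define B where "B = transpose_mat Q * \<Omega> * Q"
  have B: "B \<in> carrier_mat n n" unfolding B_def by (rule orth_conj_carrier[OF Q \<Omega>])
  have BB: "B * B = transpose_mat Q * (\<Omega> * \<Omega>) * Q" unfolding B_def by (rule orth_conj_mult[OF Q \<Omega> \<Omega>])
  have "(transpose_mat Q * J * Q) * (B * B) = (B * B) * (transpose_mat Q * J * Q)"
    using comm orth_conj_commute_iff[OF Q J \<Omega>\<Omega>] unfolding BB by simp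
  hence "(B * B) $$ (a, b) = 0" if "a < n" "b < n" "a \<noteq> b" for a b
    using commute_diagonal_mat_index_eq_0[OF D orth_conj_carrier[OF Q J] _ _ that(1,2) D_distinct[OF that]]
      B by simp
  hence "diagonal_mat (B * B)" using B unfolding diagonal_mat_def by simp
  moreover have "transpose_mat B = - B" unfolding B_def by (rule orth_conj_skew[OF Q \<Omega> skew])
  ultimately obtain bs where "admissible_blocks bs" "block_size bs \<le> n" "B = block_diag n bs"
    using skew_sorted_square_block_diag[OF B] sorted unfolding BB by blast
  thus ?thesis using Q D unfolding block_form_iff B_def by blast
qed

lemma euler_arnold_commutator:
  fixes J \<Omega> :: "'a::comm_ring mat"
  assumes J: "J \<in> carrier_mat n n" and \<Omega>: "\<Omega> \<in> carrier_mat n n"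
  shows "(\<Omega> * J + J * \<Omega>) * \<Omega> - \<Omega> * (\<Omega> * J + J * \<Omega>) = J * (\<Omega> * \<Omega>) - (\<Omega> * \<Omega>) * J"
proof -
  have "(\<Omega> * J + J * \<Omega>) * \<Omega> = \<Omega> * J * \<Omega> + J * \<Omega> * \<Omega>"
    by (rule add_mult_distrib_mat) (use J \<Omega> in auto)
  also have "J * \<Omega> * \<Omega> = J * (\<Omega> * \<Omega>)" using J \<Omega> by (intro assoc_mult_mat) auto
  finally have left: "(\<Omega> * J + J * \<Omega>) * \<Omega> = \<Omega> * J * \<Omega> + J * (\<Omega> * \<Omega>)" .
  have "\<Omega> * (\<Omega> * J + J * \<Omega>) = \<Omega> * (\<Omega> * J) + \<Omega> * (J * \<Omega>)"
    by (rule mult_add_distrib_mat) (use J \<Omega> in auto)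
  also have "\<Omega> * (\<Omega> * J) = \<Omega> * \<Omega> * J" using J \<Omega> by (intro assoc_mult_mat[symmetric]) auto
  also have "\<Omega> * (J * \<Omega>) = \<Omega> * J * \<Omega>" using J \<Omega> by (intro assoc_mult_mat[symmetric]) auto
  finally have right: "\<Omega> * (\<Omega> * J + J * \<Omega>) = \<Omega> * \<Omega> * J + \<Omega> * J * \<Omega>" .
  show ?thesis unfolding left right by (rule eq_matI) (use J \<Omega> in auto)
qed

lemma minus_mat_eq_0_iff:
  fixes X Y :: "'a::ab_group_add mat"
  assumes X: "X \<in> carrier_mat n m" and Y: "Y \<in> carrier_mat n m"
  shows "X - Y = 0\<^sub>m n m \<longleftrightarrow> X = Y"
proof
  assume XY: "X - Y = 0\<^sub>m n m"
  show "X = Y"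
  proof (rule eq_matI)
    fix i j assume ij: "i < dim_row Y" "j < dim_col Y"
    hence "X $$ (i, j) - Y $$ (i, j) = (X - Y) $$ (i, j)" using Y by simp
    also have "\<dots> = 0" unfolding XY using ij Y by simp
    finally show "X $$ (i, j) = Y $$ (i, j)" by simp
  qed (use X Y in auto)
qed (use Y in simp)

lemma equilibrium_iff_commute_square:
  fixes J \<Omega> M :: "real mat"
  assumes J: "J \<in> carrier_mat n n" and \<Omega>: "\<Omega> \<in> carrier_mat n n" and M: "\<Omega> * J + J * \<Omega> = M"
  shows "M * \<Omega> - \<Omega> * M = 0\<^sub>m n n \<longleftrightarrow> J * (\<Omega> * \<Omega>) = (\<Omega> * \<Omega>) * J"
  using euler_arnold_commutator[OF J \<Omega>] minus_mat_eq_0_iff[of "J * (\<Omega> * \<Omega>)" n n "(\<Omega> * \<Omega>) * J"] J \<Omega>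
  unfolding M by simp

theorem theorem1:
  fixes n :: nat and J M \<Omega> :: "real mat"
  assumes "symmetric_mat n J"
    and "card {e. eigenvalue J e} = n"
    and "skew_mat n M"
    and "skew_mat n \<Omega>"
    and "\<Omega> * J + J * \<Omega> = M"
  shows "(M * \<Omega> - \<Omega> * M = 0\<^sub>m n n \<longleftrightarrow> (\<exists>Q bs. block_form n J \<Omega> Q bs))
    \<and> (\<forall>Q bs Q' bs'. block_form n J \<Omega> Q bs \<and> block_form n J \<Omega> Q' bs' \<longrightarrow>
         mset (map (\<lambda>(w, A). (w, dim_row A)) bs) = mset (map (\<lambda>(w, A). (w, dim_row A)) bs'))"
proof -
  have J: "J \<in> carrier_mat n n" using assms(1) unfolding symmetric_mat_def by simp
  have \<Omega>: "\<Omega> \<in> carrier_mat n n" and skew: "transpose_mat \<Omega> = - \<Omega>"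
    using assms(4) unfolding skew_mat_def by auto
  have "M * \<Omega> - \<Omega> * M = 0\<^sub>m n n \<longleftrightarrow> J * (\<Omega> * \<Omega>) = (\<Omega> * \<Omega>) * J"
    by (rule equilibrium_iff_commute_square[OF J \<Omega> assms(5)])
  also have "\<dots> \<longleftrightarrow> (\<exists>Q bs. block_form n J \<Omega> Q bs)"
    using block_form_if_commute_square[OF assms(1,2) \<Omega> skew] commute_square_if_block_form[OF _ J \<Omega>]
    by blast
  finally show ?thesis using block_form_unique[OF _ _ \<Omega>] by blast
qed

end
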